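(* Let $\mathcal{T}$ be a set of monomials, and let $\mathcal{L}=(n,\mathcal{M},\mathcal{C})$ be a simple linearization with $\mathcal{S}\cup\mathcal{T}\subseteq\mathcal{M}$ such that every node of $D(\mathcal{L})$ with in-degree $0$ belongs to $\mathcal{T}$. Let $m_1,m_2\in\mathcal{M}$ with $m_1\cap m_2\neq\emptyset$ and $m_1\cap m_2\notin\mathrm{succ}(m_1)\cap\mathrm{succ}(m_2)$. Then $G(D(\mathcal{L}))$ contains a cycle.
   Context: $[n]=\{1,\dots,n\}$; a monomial is a nonempty subset of $[n]$; $\mathcal{S}=\{\{i\}:i\in[n]\}$. A linearization is a triple $\mathcal{L}=(n,\mathcal{M},\mathcal{C})$, where $\mathcal{M}$ is a set of monomials with $\mathcal{S}\subseteq\mathcal{M}$ and $\mathcal{C}$ is a set of AND-constraints; each AND-constraint is a set $c\subseteq\mathcal{M}$ whose union $\bigcup c$ (resultant) lies in $\mathcal{M}$. $\mathcal{P}=\mathcal{M}\setminus\mathcal{S}$. Linearizations are consistent: each $m\in\mathcal{P}$ is the resultant of some $c$ with $|m'|<|m|$ for all $m'\in c$. $\mathcal{L}$ is simple if each proper monomial is the resultant of exactly one AND-constraint and $|\mathcal{C}|=|\mathcal{P}|$. $D(\mathcal{L})$ has node set $\mathcal{M}$ and, for each $c\in\mathcal{C}$, arcs from $\bigcup c$ to each $m\in c$; $G(D(\mathcal{L}))$ is its underlying undirected graph. $\mathrm{succ}(m)$ is the set of nodes reachable from $m$ by a directed path in $D(\mathcal{L})$, including $m$. *)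

theory Defs
  imports Main
begin

definition monomial :: "nat \<Rightarrow> nat set \<Rightarrow> bool" where
  "monomial n m \<longleftrightarrow> m \<noteq> {} \<and> m \<subseteq> {1..n}"

definition singletons :: "nat \<Rightarrow> nat set set" where
  "singletons n = {{i} | i. i \<in> {1..n}}"

definition linearization :: "nat \<Rightarrow> nat set set \<Rightarrow> nat set set set \<Rightarrow> bool" where
  "linearization n M C \<longleftrightarrow>
     (\<forall>m\<in>M. monomial n m) \<and> singletons n \<subseteq> M \<and>
     (\<forall>c\<in>C. c \<subseteq> M \<and> \<Union>c \<in> M) \<and>
     (\<forall>m \<in> M - singletons n. \<exists>c\<in>C. \<Union>c = m \<and> (\<forall>m'\<in>c. card m' < card m))"

definition simple_linearization :: "nat \<Rightarrow> nat set set \<Rightarrow> nat set set set \<Rightarrow> bool" where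
  "simple_linearization n M C \<longleftrightarrow>
     linearization n M C \<and>
     (\<forall>m \<in> M - singletons n. \<exists>!c. c \<in> C \<and> \<Union>c = m) \<and>
     card C = card (M - singletons n)"

definition lin_arcs :: "nat set set set \<Rightarrow> (nat set \<times> nat set) set" where
  "lin_arcs C = {(\<Union>c, m) | c m. c \<in> C \<and> m \<in> c}"

definition in_degree_zero :: "nat set set set \<Rightarrow> nat set \<Rightarrow> bool" where
  "in_degree_zero C v \<longleftrightarrow> \<not> (\<exists>u. (u, v) \<in> lin_arcs C)"

definition succ :: "nat set set set \<Rightarrow> nat set \<Rightarrow> nat set set" where
  "succ C m = {v. (m, v) \<in> (lin_arcs C)\<^sup>*}"

definition ug_adj :: "nat set set set \<Rightarrow> nat set \<Rightarrow> nat set \<Rightarrow> bool" where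
  "ug_adj C u v \<longleftrightarrow> (u, v) \<in> lin_arcs C \<or> (v, u) \<in> lin_arcs C"

definition ug_has_cycle :: "nat set set \<Rightarrow> nat set set set \<Rightarrow> bool" where
  "ug_has_cycle M C \<longleftrightarrow>
     (\<exists>vs. length vs \<ge> 3 \<and> distinct vs \<and> set vs \<subseteq> M \<and>
        (\<forall>i < length vs. ug_adj C (vs ! i) (vs ! ((i + 1) mod length vs))))"

end

theory Submission imports Defs begin

(* Since |C| = |P|, every AND-constraint of a simple linearization is the one witnessing
   consistency, so each arc of D(L) goes from a monomial to a proper subset of it, and every
   m reaches {i} for each i in m.  Suppose G(D(L)) is a forest.  For i in m1 \<inter> m2, follow
   directed paths from m1 and from m2 down to {i} up to their first common vertex u: this gives
   the path between m1 and m2 in the forest, and u is its strictly smallest vertex.  That path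
   is unique, so u does not depend on i; hence u contains m1 \<inter> m2, and u is contained in it
   because it lies below both.  So m1 \<inter> m2 = u \<in> succ(m1) \<inter> succ(m2). *)

definition undirected :: "('a \<times> 'a) set \<Rightarrow> 'a \<Rightarrow> 'a \<Rightarrow> bool" where
  "undirected R x y \<longleftrightarrow> (x, y) \<in> R \<or> (y, x) \<in> R"

definition has_cycle :: "('a \<Rightarrow> 'a \<Rightarrow> bool) \<Rightarrow> 'a set \<Rightarrow> bool" where
  "has_cycle E V \<longleftrightarrow>
     (\<exists>vs. length vs \<ge> 3 \<and> distinct vs \<and> set vs \<subseteq> V \<and>
        (\<forall>i < length vs. E (vs ! i) (vs ! ((i + 1) mod length vs))))"

definition simple_path :: "('a \<Rightarrow> 'a \<Rightarrow> bool) \<Rightarrow> 'a set \<Rightarrow> 'a list \<Rightarrow> bool" where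
  "simple_path E V p \<longleftrightarrow> p \<noteq> [] \<and> distinct p \<and> set p \<subseteq> V \<and> successively E p"

abbreviation walk :: "('a \<times> 'a) set \<Rightarrow> 'a list \<Rightarrow> bool" where
  "walk R \<equiv> successively (\<lambda>x y. (x, y) \<in> R)"

lemma symp_undirected: "symp (undirected R)"
  unfolding undirected_def by (rule sympI) blast

lemma ug_has_cycle_iff: "ug_has_cycle M C \<longleftrightarrow> has_cycle (undirected (lin_arcs C)) M"
  unfolding ug_has_cycle_def has_cycle_def ug_adj_def undirected_def ..

lemma has_cycleI:
  assumes "length vs \<ge> 3" "distinct vs" "set vs \<subseteq> V" "successively E (vs @ [hd vs])"
  shows "has_cycle E V"
  unfolding has_cycle_def
proof (intro exI[of _ vs] conjI allI impI)
  fix i assume i: "i < length vs"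
  have step: "E ((vs @ [hd vs]) ! i) ((vs @ [hd vs]) ! Suc i)"
    using successively_nth[OF assms(4)] i by simp
  have "vs \<noteq> []" using assms(1) by auto
  show "E (vs ! i) (vs ! ((i + 1) mod length vs))"
  proof (cases "Suc i < length vs")
    case True
    then show ?thesis using step by (simp add: nth_append)
  next
    case False
    then have "Suc i = length vs" using i by simp
    then show ?thesis using step \<open>vs \<noteq> []\<close> by (simp add: nth_append hd_conv_nth)
  qed
qed (use assms in auto)

lemma simple_path_ConsD: "simple_path E V (x # p) \<Longrightarrow> p \<noteq> [] \<Longrightarrow> simple_path E V p"
  unfolding simple_path_def by (auto simp: successively_Cons)

lemma has_cycle_if_paths_diverge:
  assumes "symp E" and p: "simple_path E V (x # p)" and q: "simple_path E V (x # q)"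
    and "hd p \<noteq> hd q" "set p \<inter> set q \<noteq> {}"
  shows "has_cycle E V"
proof -
  obtain A w B where pA: "p = A @ w # B" and "w \<in> set q" and A_q: "\<forall>v\<in>set A. v \<notin> set q"
    using split_list_first_prop[of p "\<lambda>v. v \<in> set q"] \<open>set p \<inter> set q \<noteq> {}\<close> by blast
  then obtain Q1 Q2 where qQ: "q = Q1 @ w # Q2" by (meson split_list)
  define vs where "vs = x # A @ w # rev Q1"
  have via_p: "successively E ((x # A) @ [w])"
    using p unfolding simple_path_def pA
    using successively_append_iff[of E "x # A @ [w]" B] by simp
  have via_q: "successively E (x # Q1 @ [w])"
    using q unfolding simple_path_def qQ
    using successively_append_iff[of E "x # Q1 @ [w]" Q2] by simp
  have "successively E (rev (x # Q1 @ [w]))"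
    unfolding successively_rev using via_q
    by (rule successively_mono) (use \<open>symp E\<close> in \<open>blast dest: sympD\<close>)
  then have closed: "successively E ((x # A) @ (w # rev Q1 @ [x]))"
    using via_p unfolding successively_append_iff by simp
  have "length vs \<ge> 3"
    using \<open>hd p \<noteq> hd q\<close> unfolding vs_def pA qQ by (cases A; cases Q1) auto
  moreover have "distinct vs" "set vs \<subseteq> V"
    using p q A_q unfolding simple_path_def vs_def pA qQ by auto
  moreover have "successively E (vs @ [hd vs])"
    using closed unfolding vs_def by simp
  ultimately show ?thesis by (rule has_cycleI)
qed

lemma simple_path_unique:
  assumes "symp E" "\<not> has_cycle E V"
  shows "simple_path E V p \<Longrightarrow> simple_path E V q \<Longrightarrow> hd p = hd q \<Longrightarrow> last p = last q \<Longrightarrow>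
    p = q"
proof (induction p arbitrary: q)
  case Nil
  then show ?case by (simp add: simple_path_def)
next
  case (Cons x p)
  then obtain q' where q: "q = x # q'" by (cases q) (auto simp: simple_path_def)
  consider "p = []" | "q' = []" | "p \<noteq> []" "q' \<noteq> []" by blast
  then show ?case
  proof cases
    case 1
    then show ?thesis using Cons.prems unfolding q simple_path_def by (cases q' rule: rev_cases) auto
  next
    case 2
    then show ?thesis using Cons.prems unfolding q simple_path_def by (cases p rule: rev_cases) auto
  next
    case 3
    have "last p \<in> set p \<inter> set q'"
      using 3 Cons.prems(4) unfolding q by (metis IntI last.simps last_in_set)
    then have "hd p = hd q'"
      using has_cycle_if_paths_diverge[OF \<open>symp E\<close>] Cons.prems(1,2) \<open>\<not> has_cycle E V\<close>
      unfolding q by blast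
    moreover have "simple_path E V p" "simple_path E V q'"
      using Cons.prems(1,2) 3 unfolding q by (simp_all add: simple_path_ConsD)
    ultimately show ?thesis
      using Cons.IH[of q'] Cons.prems(4) 3 unfolding q by simp
  qed
qed

lemma walk_if_rtrancl:
  assumes "(x, y) \<in> R\<^sup>*"
  obtains xs where "walk R (x # xs)" "last (x # xs) = y"
  using assms
proof (induction arbitrary: thesis rule: converse_rtrancl_induct)
  case base
  then show ?case by (metis last.simps successively.simps(2))
next
  case (step x z)
  then show ?case by (metis last.simps list.discI successively.simps(3))
qed

lemma rtrancl_if_walk: "walk R (x # xs) \<Longrightarrow> y \<in> set (x # xs) \<Longrightarrow> (x, y) \<in> R\<^sup>*"
proof (induction xs arbitrary: x)
  case (Cons z xs)
  then show ?case by (auto intro: converse_rtrancl_into_rtrancl)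
qed simp

lemma walk_in_vertices:
  assumes "R \<subseteq> V \<times> V" "x \<in> V" "walk R (x # xs)"
  shows "set (x # xs) \<subseteq> V"
  using assms(2,3) by (induction xs arbitrary: x) (use assms(1) in auto)

lemma rtrancl_descending:
  fixes R :: "('a :: order \<times> 'a) set"
  assumes "\<forall>(x, y) \<in> R. y < x" "(x, y) \<in> R\<^sup>*"
  shows "y \<le> x"
  using assms(2) by induction (use assms(1) in force)+

lemma walk_descending:
  fixes R :: "('a :: order \<times> 'a) set"
  assumes "\<forall>(x, y) \<in> R. y < x" "walk R xs"
  shows "sorted_wrt (\<lambda>x y. y < x) xs"
proof -
  have "successively (\<lambda>x y. y < x) xs"
    using assms(2) by (rule successively_mono) (use assms(1) in blast)
  then show ?thesis by (simp add: successively_conv_sorted_wrt transp_def)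
qed

lemma distinct_if_sorted_descending:
  "sorted_wrt (\<lambda>x y. y < x) xs \<Longrightarrow> distinct (xs :: 'a :: order list)"
  by (induction xs) auto

lemma descending_walks_meet:
  fixes R :: "('a :: order \<times> 'a) set"
  assumes desc: "\<forall>(x, y) \<in> R. y < x" and RV: "R \<subseteq> V \<times> V" and "x1 \<in> V" "x2 \<in> V"
    and "(x1, w) \<in> R\<^sup>*" "(x2, w) \<in> R\<^sup>*"
  obtains L u where "simple_path (undirected R) V L" "hd L = x1" "last L = x2"
    "u \<in> set L" "\<forall>v \<in> set L - {u}. u < v"
    "(x1, u) \<in> R\<^sup>*" "(x2, u) \<in> R\<^sup>*" "(u, w) \<in> R\<^sup>*"
proof -
  obtain P1 where P1: "walk R (x1 # P1)" "last (x1 # P1) = w"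
    using walk_if_rtrancl[OF \<open>(x1, w) \<in> R\<^sup>*\<close>] .
  obtain P2 where P2: "walk R (x2 # P2)" "last (x2 # P2) = w"
    using walk_if_rtrancl[OF \<open>(x2, w) \<in> R\<^sup>*\<close>] .
  have "w \<in> set (x2 # P2)" using P2(2) by (metis last_in_set list.distinct(1))
  then obtain A u B where split1: "x1 # P1 = A @ u # B" and "u \<in> set (x2 # P2)"
      and A_P2: "\<forall>v \<in> set A. v \<notin> set (x2 # P2)"
    using split_list_first_prop[of "x1 # P1" "\<lambda>v. v \<in> set (x2 # P2)"] P1(2)
    by (metis last_in_set list.distinct(1))
  then obtain A2 B2 where split2: "x2 # P2 = A2 @ u # B2" by (meson split_list)
  define L where "L = A @ u # rev A2"
  have sorted1: "sorted_wrt (\<lambda>x y. y < x) (A @ u # B)"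
    and sorted2: "sorted_wrt (\<lambda>x y. y < x) (A2 @ u # B2)"
    using walk_descending[OF desc] P1(1) P2(1) unfolding split1 split2 by auto
  have walk1: "walk R (A @ [u])" "walk R (u # B)" and walk2: "walk R (A2 @ [u])"
    using P1(1) P2(1) unfolding split1 split2 by (auto simp: successively_append_iff)
  have "successively (undirected R) (A @ [u])" "successively (undirected R) (rev (A2 @ [u]))"
    unfolding successively_rev using walk1(1) walk2
    by (auto elim!: successively_mono simp: undirected_def)
  then have "successively (undirected R) L"
    unfolding L_def by (auto simp: successively_append_iff)
  moreover have "distinct L"
    using sorted1 sorted2 A_P2 unfolding L_def split2
    by (auto dest: distinct_if_sorted_descending)
  moreover have "set L \<subseteq> V"
    using walk_in_vertices[OF RV \<open>x1 \<in> V\<close> P1(1)] walk_in_vertices[OF RV \<open>x2 \<in> V\<close> P2(1)]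
    unfolding L_def split1 split2 by auto
  ultimately have "simple_path (undirected R) V L" unfolding simple_path_def L_def by simp
  moreover have "hd L = x1" "last L = x2"
    using split1 split2 unfolding L_def by (cases A; cases A2; auto)+
  moreover have "u \<in> set L" unfolding L_def by simp
  moreover have "\<forall>v \<in> set L - {u}. u < v"
    using sorted1 sorted2 unfolding L_def by (auto simp: sorted_wrt_append)
  moreover have "(x1, u) \<in> R\<^sup>*" "(x2, u) \<in> R\<^sup>*"
    using rtrancl_if_walk[OF P1(1)] rtrancl_if_walk[OF P2(1)] split1 split2
    by (metis in_set_conv_decomp)+
  moreover have "(u, w) \<in> R\<^sup>*"
    using rtrancl_if_walk[OF walk1(2)] P1(2) unfolding split1
    by (metis last_ConsR last_appendR last_in_set list.discI)
  ultimately show thesis by (rule that)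
qed

lemma inter_reachable_if_acyclic:
  fixes R :: "('a set \<times> 'a set) set"
  assumes desc: "\<forall>(x, y) \<in> R. y \<subset> x" and RV: "R \<subseteq> V \<times> V"
    and acyclic: "\<not> has_cycle (undirected R) V"
    and "x1 \<in> V" "x2 \<in> V" "x1 \<inter> x2 \<noteq> {}"
    and reach: "\<forall>i \<in> x1 \<inter> x2. (x1, {i}) \<in> R\<^sup>* \<and> (x2, {i}) \<in> R\<^sup>*"
  shows "(x1, x1 \<inter> x2) \<in> R\<^sup>*" "(x2, x1 \<inter> x2) \<in> R\<^sup>*"
proof -
  note meet = descending_walks_meet[OF desc RV \<open>x1 \<in> V\<close> \<open>x2 \<in> V\<close>]
  obtain i0 where "i0 \<in> x1 \<inter> x2" using \<open>x1 \<inter> x2 \<noteq> {}\<close> by blast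
  then obtain L0 u0 where L0: "simple_path (undirected R) V L0" "hd L0 = x1" "last L0 = x2"
      and "u0 \<in> set L0" and u0_min: "\<forall>v \<in> set L0 - {u0}. u0 \<subset> v"
      and u0_reach: "(x1, u0) \<in> R\<^sup>*" "(x2, u0) \<in> R\<^sup>*"
    using meet reach by metis
  have "{i} \<subseteq> u0" if "i \<in> x1 \<inter> x2" for i
  proof -
    obtain L u where "simple_path (undirected R) V L" "hd L = x1" "last L = x2"
        and "u \<in> set L" and u_min: "\<forall>v \<in> set L - {u}. u \<subset> v" and "(u, {i}) \<in> R\<^sup>*"
      using meet reach \<open>i \<in> x1 \<inter> x2\<close> by metis
    moreover have "L = L0"
      using simple_path_unique[OF symp_undirected acyclic] L0 calculation(1-3) by simp
    ultimately have "u = u0" using u0_min \<open>u0 \<in> set L0\<close> by blast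
    then show ?thesis using rtrancl_descending[OF desc \<open>(u, {i}) \<in> R\<^sup>*\<close>] by simp
  qed
  moreover have "u0 \<subseteq> x1 \<inter> x2"
    using rtrancl_descending[OF desc] u0_reach by blast
  ultimately have "u0 = x1 \<inter> x2" by blast
  then show "(x1, x1 \<inter> x2) \<in> R\<^sup>*" "(x2, x1 \<inter> x2) \<in> R\<^sup>*"
    using u0_reach by simp_all
qed

lemma linearization_finite_constraints:
  assumes "linearization n M C"
  shows "finite C"
proof -
  have "M \<subseteq> Pow {1..n}" "C \<subseteq> Pow M"
    using assms unfolding linearization_def monomial_def by auto
  then show ?thesis by (meson finite_Pow_iff finite_atLeastAtMost finite_subset)
qed

lemma linearization_consistent:
  "linearization n M C \<Longrightarrow> m \<in> M - singletons n \<Longrightarrow>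
    \<exists>c \<in> C. \<Union>c = m \<and> (\<forall>m' \<in> c. card m' < card m)"
  unfolding linearization_def by blast

lemma lin_arcs_subset: "linearization n M C \<Longrightarrow> lin_arcs C \<subseteq> M \<times> M"
  unfolding linearization_def lin_arcs_def by blast

lemma simple_linearization_card_less:
  assumes "simple_linearization n M C" "c \<in> C" "m \<in> c"
  shows "card m < card (\<Union>c)"
proof -
  let ?P = "M - singletons n"
  \<comment> \<open>the constraints witnessing consistency already number |P| = |C|, so they are all of C\<close>
  define C' where "C' = {c \<in> C. \<Union>c \<in> ?P \<and> (\<forall>m \<in> c. card m < card (\<Union>c))}"
  have lin: "linearization n M C" and uniq: "\<forall>m \<in> ?P. \<exists>!c. c \<in> C \<and> \<Union>c = m"
    and "card C = card ?P"
    using assms(1) unfolding simple_linearization_def by auto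
  have "inj_on Union C'"
  proof (rule inj_onI)
    fix c1 c2 assume "c1 \<in> C'" "c2 \<in> C'" "\<Union>c1 = \<Union>c2"
    moreover have "\<exists>!c. c \<in> C \<and> \<Union>c = \<Union>c2"
      using uniq \<open>c2 \<in> C'\<close> unfolding C'_def by simp
    ultimately show "c1 = c2" using \<open>c1 \<in> C'\<close> \<open>c2 \<in> C'\<close> unfolding C'_def
      by (metis (mono_tags, lifting) mem_Collect_eq)
  qed
  moreover have "Union ` C' = ?P"
  proof
    show "Union ` C' \<subseteq> ?P" unfolding C'_def by auto
  next
    show "?P \<subseteq> Union ` C'"
    proof
      fix m assume "m \<in> ?P"
      then obtain c where "c \<in> C" "\<Union>c = m" "\<forall>m' \<in> c. card m' < card m"
        using linearization_consistent[OF lin \<open>m \<in> ?P\<close>] by blast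
      then show "m \<in> Union ` C'"
        using \<open>m \<in> ?P\<close> unfolding C'_def by (intro rev_image_eqI[of c]) auto
    qed
  qed
  ultimately have "card C' = card C"
    using card_image \<open>card C = card ?P\<close> by metis
  then have "C' = C"
    by (intro card_subset_eq[OF linearization_finite_constraints[OF lin]]) (auto simp: C'_def)
  then show ?thesis using assms(2,3) unfolding C'_def by blast
qed

lemma simple_linearization_arc_psubset:
  assumes "simple_linearization n M C" "(x, y) \<in> lin_arcs C"
  shows "y \<subset> x"
proof -
  obtain c where "c \<in> C" "x = \<Union>c" "y \<in> c" using assms(2) unfolding lin_arcs_def by blast
  then show ?thesis using simple_linearization_card_less[OF assms(1)] by blast
qed

lemma linearization_reaches_singleton:
  assumes lin: "linearization n M C" and "m \<in> M" "i \<in> m"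
  shows "(m, {i}) \<in> (lin_arcs C)\<^sup>*"
  using assms(2,3)
proof (induction "card m" arbitrary: m rule: less_induct)
  case less
  show ?case
  proof (cases "m \<in> singletons n")
    case True
    then show ?thesis using less.prems unfolding singletons_def by auto
  next
    case False
    then obtain c where c: "c \<in> C" "\<Union>c = m" "\<forall>m' \<in> c. card m' < card m"
      using linearization_consistent[OF lin] less.prems(1) by blast
    then obtain m' where "m' \<in> c" "i \<in> m'" using less.prems(2) by blast
    then have "(m, m') \<in> lin_arcs C" "(m', {i}) \<in> (lin_arcs C)\<^sup>*"
      using c less.hyps lin_arcs_subset[OF lin] unfolding lin_arcs_def by blast+
    then show ?thesis by (rule converse_rtrancl_into_rtrancl)
  qed
qed

theorem lemma4p3:
  fixes n :: nat and M T :: "nat set set" and C :: "nat set set set" and m1 m2 :: "nat set"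
  assumes "simple_linearization n M C"
    and "\<forall>t\<in>T. monomial n t"
    and "singletons n \<union> T \<subseteq> M"
    and "\<forall>v\<in>M. in_degree_zero C v \<longrightarrow> v \<in> T"
    and "m1 \<in> M" and "m2 \<in> M"
    and "m1 \<inter> m2 \<noteq> {}"
    and "m1 \<inter> m2 \<notin> succ C m1 \<inter> succ C m2"
  shows "ug_has_cycle M C"
proof (rule ccontr)
  assume "\<not> ug_has_cycle M C"
  then have acyclic: "\<not> has_cycle (undirected (lin_arcs C)) M"
    unfolding ug_has_cycle_iff .
  have lin: "linearization n M C"
    using assms(1) unfolding simple_linearization_def by blast
  have "\<forall>(x, y) \<in> lin_arcs C. y \<subset> x"
    using simple_linearization_arc_psubset[OF assms(1)] by blast
  moreover have "\<forall>i \<in> m1 \<inter> m2. (m1, {i}) \<in> (lin_arcs C)\<^sup>* \<and> (m2, {i}) \<in> (lin_arcs C)\<^sup>*"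
    using linearization_reaches_singleton[OF lin] assms(5,6) by blast
  ultimately have "m1 \<inter> m2 \<in> succ C m1 \<inter> succ C m2"
    using inter_reachable_if_acyclic[OF _ lin_arcs_subset[OF lin] acyclic assms(5-7)]
    unfolding succ_def by blast
  then show False using assms(8) by blast
qed

end
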